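(* Let $T:\Omega\to\Omega$ be measurable and $\mu$ a $T$-invariant probability measure, and let $U\subset\Omega$ with $\mu(U)>0$. Then for every $L\in\mathbb{N}$, $$\mathbb{P}(Z^L_U\ge1)=\mu(U)\sum_{j=1}^{L}\alpha_1(j,U).$$ If moreover $U_n\subset\Omega$ is a nested sequence with $\mu(U_n)\to0$, such that for every $L$ the limit $\alpha_1(L)=\lim_{n\to\infty}\alpha_1(L,U_n)$ exists and $\alpha_1=\lim_{L\to\infty}\alpha_1(L)>0$, then $$\lim_{L\to\infty}\lim_{n\to\infty}\frac{\mathbb{P}(Z^L_{U_n}\ge1)}{L\,\mu(U_n)}=\alpha_1.$$
   Context: $\mathbb{P}=\mathbb{P}_\mu$. $Z^L_U=\sum_{j=0}^{L-1}\mathbbm{1}_U\circ T^j$, so $\{Z^L_U\ge1\}$ is the set of points entering $U$ at some time $0\le j<L$. $\tau_U(x)=\min\{j\ge1:T^jx\in U\}$ is the first return/entry time, $\mu_U(A)=\mu(A\cap U)/\mu(U)$, and $\alpha_1(L,U)=\mu_U(L\le\tau_U)$. *)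

theory Defs
  imports "HOL-Probability.Probability"
begin

definition first_return :: "('a \<Rightarrow> 'a) \<Rightarrow> 'a set \<Rightarrow> 'a \<Rightarrow> enat" where
  "first_return T U x =
     (if \<exists>j\<ge>1. (T ^^ j) x \<in> U then enat (LEAST j. j \<ge> 1 \<and> (T ^^ j) x \<in> U) else \<infinity>)"

definition cond_measure :: "'a measure \<Rightarrow> 'a set \<Rightarrow> 'a set \<Rightarrow> real" where
  "cond_measure M U A = measure M (A \<inter> U) / measure M U"

definition alpha1 :: "'a measure \<Rightarrow> ('a \<Rightarrow> 'a) \<Rightarrow> nat \<Rightarrow> 'a set \<Rightarrow> real" where
  "alpha1 M T L U = cond_measure M U {x \<in> space M. enat L \<le> first_return T U x}"

definition hit_event :: "'a measure \<Rightarrow> ('a \<Rightarrow> 'a) \<Rightarrow> nat \<Rightarrow> 'a set \<Rightarrow> 'a set" where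
  "hit_event M T L U = {x \<in> space M. (\<Sum>j<L. indicator U ((T ^^ j) x) :: nat) \<ge> 1}"

end

theory Submission
  imports Defs
begin

text \<open>A point enters \<open>U\<close> within \<open>L + 1\<close> steps iff it lies in \<open>U\<close> or its image enters \<open>U\<close>
  within \<open>L\<close> steps, and the points of the first kind not of the second kind are exactly those of
  \<open>U \<inter> {\<tau>\<^sub>U \<ge> L + 1}\<close>. By invariance the second event has the measure of the \<open>L\<close>-step hitting
  event, so each step adds \<open>\<mu>(U \<inter> {\<tau>\<^sub>U \<ge> L + 1}) = \<mu>(U) \<alpha>\<^sub>1(L + 1, U)\<close>. The normalised ratio is
  therefore the Cesaro mean of \<open>\<alpha>\<^sub>1(j, U\<^sub>n)\<close>, \<open>j \<le> L\<close>, which tends to the Cesaro mean of \<open>\<alpha>\<^sub>1(j)\<close>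
  as \<open>n \<rightarrow> \<infinity>\<close> and then to \<open>\<alpha>\<^sub>1\<close> as \<open>L \<rightarrow> \<infinity>\<close>.\<close>

lemma cesaro_mean_tendsto_zero:
  fixes c :: "nat \<Rightarrow> real"
  assumes "c \<longlonglongrightarrow> 0"
  shows "(\<lambda>n. (\<Sum>j=1..n. c j) / real n) \<longlonglongrightarrow> 0"
proof (rule LIMSEQ_I)
  fix r :: real
  assume r: "0 < r"
  obtain N where N: "\<And>n. n \<ge> N \<Longrightarrow> \<bar>c n\<bar> < r / 2"
    using LIMSEQ_D[OF assms, of "r / 2"] r by auto
  define K where "K = (\<Sum>j=1..N. \<bar>c j\<bar>)"
  obtain N' :: nat where N': "2 * K / r < N'"
    using reals_Archimedean2 by blast
  have "\<bar>(\<Sum>j=1..n. c j) / real n\<bar> < r" if n: "n \<ge> max (Suc N) N'" for n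
  proof -
    have "{1..n} = {1..N} \<union> {Suc N..n}"
      using n by auto
    then have "\<bar>\<Sum>j=1..n. c j\<bar> \<le> K + (\<Sum>j=Suc N..n. \<bar>c j\<bar>)"
      unfolding K_def by (metis sum_abs atLeastSucAtMost_greaterThanAtMost
          finite_atLeastAtMost ivl_disj_int_two(8) sum.union_disjoint)
    also have "(\<Sum>j=Suc N..n. \<bar>c j\<bar>) \<le> (\<Sum>j=Suc N..n. r / 2)"
      by (intro sum_mono less_imp_le N) auto
    also have "\<dots> \<le> real n * (r / 2)"
      using r by simp
    also have "K < real n * (r / 2)"
    proof -
      have "2 * K / r < real n"
        using N' n by linarith
      then show ?thesis
        using r by (simp add: divide_less_eq mult.commute)
    qed
    finally have "\<bar>\<Sum>j=1..n. c j\<bar> < real n * r"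
      by (simp add: mult.commute)
    then show ?thesis
      using n by (simp add: abs_divide divide_less_eq mult.commute)
  qed
  then show "\<exists>N. \<forall>n\<ge>N. norm ((\<Sum>j=1..n. c j) / real n - 0) < r"
    by (metis real_norm_def diff_zero)
qed

lemma cesaro_mean_tendsto:
  fixes a :: "nat \<Rightarrow> real"
  assumes "a \<longlonglongrightarrow> l"
  shows "(\<lambda>n. (\<Sum>j=1..n. a j) / real n) \<longlonglongrightarrow> l"
proof -
  have "(\<lambda>n. (\<Sum>j=1..n. a j - l) / real n + l) \<longlonglongrightarrow> 0 + l"
    using assms by (intro tendsto_add cesaro_mean_tendsto_zero tendsto_const) (simp add: LIM_zero)
  moreover have "\<forall>\<^sub>F n in sequentially. (\<Sum>j=1..n. a j - l) / real n + l = (\<Sum>j=1..n. a j) / real n"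
    using eventually_gt_at_top[of 0] by eventually_elim (simp add: sum_subtractf field_simps)
  ultimately show ?thesis
    by (simp add: tendsto_cong)
qed

lemma hit_event_altdef: "hit_event M T L U = {x \<in> space M. \<exists>j<L. (T ^^ j) x \<in> U}"
proof -
  have "(\<Sum>j<L. indicator U (f j) :: nat) \<ge> 1 \<longleftrightarrow> (\<exists>j<L. f j \<in> U)" for f :: "nat \<Rightarrow> _"
    by (induction L) (auto simp: indicator_def less_Suc_eq)
  then show ?thesis
    unfolding hit_event_def by auto
qed

lemma enat_le_first_return_iff:
  "enat k \<le> first_return T U x \<longleftrightarrow> (\<forall>j. 1 \<le> j \<and> j < k \<longrightarrow> (T ^^ j) x \<notin> U)"
proof (cases "\<exists>j\<ge>1. (T ^^ j) x \<in> U")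
  case True
  let ?m = "LEAST j. j \<ge> 1 \<and> (T ^^ j) x \<in> U"
  have m: "?m \<ge> 1 \<and> (T ^^ ?m) x \<in> U"
    using LeastI_ex[OF True] .
  have least: "?m \<le> j" if "j \<ge> 1" "(T ^^ j) x \<in> U" for j
    using that by (intro Least_le) simp
  have "first_return T U x = enat ?m"
    using True unfolding first_return_def by simp
  then have "enat k \<le> first_return T U x \<longleftrightarrow> k \<le> ?m"
    by simp
  also have "\<dots> \<longleftrightarrow> (\<forall>j. 1 \<le> j \<and> j < k \<longrightarrow> (T ^^ j) x \<notin> U)"
    using m least by (meson le_less_trans not_le)
  finally show ?thesis .
next
  case False
  then show ?thesis
    unfolding first_return_def by auto
qed

lemma enat_Suc_le_first_return_iff:
  "enat (Suc L) \<le> first_return T U x \<longleftrightarrow> (\<forall>j<L. (T ^^ j) (T x) \<notin> U)"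
  unfolding enat_le_first_return_iff by (auto simp: Suc_le_eq gr0_conv_Suc funpow_swap1)

lemma measurable_funpow: "T \<in> measurable M M \<Longrightarrow> T ^^ n \<in> measurable M M"
  by (induction n) (auto simp: measurable_comp)

lemma sets_hit_event:
  assumes "T \<in> measurable M M" "U \<in> sets M"
  shows "hit_event M T L U \<in> sets M"
proof -
  have "hit_event M T L U = (\<Union>j<L. (T ^^ j) -` U \<inter> space M)"
    unfolding hit_event_altdef by auto
  also have "\<dots> \<in> sets M"
    by (rule sets.finite_UN) (use measurable_sets[OF measurable_funpow[OF assms(1)] assms(2)] in auto)
  finally show ?thesis .
qed

lemma hit_event_Suc_eq:
  assumes "T \<in> measurable M M"
  shows "hit_event M T (Suc L) U =
           (U \<inter> {x \<in> space M. enat (Suc L) \<le> first_return T U x}) \<union> (T -` hit_event M T L U \<inter> space M)"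
  using measurable_space[OF assms]
  unfolding hit_event_altdef enat_Suc_le_first_return_iff Ex_less_Suc2 funpow_Suc_right
  by auto

lemma measure_hit_event:
  assumes "finite_measure M" "T \<in> measurable M M" "distr M M T = M" "U \<in> sets M"
  shows "measure M (hit_event M T L U) =
           (\<Sum>j=1..L. measure M (U \<inter> {x \<in> space M. enat j \<le> first_return T U x}))"
proof (induction L)
  case 0
  then show ?case
    by (simp add: hit_event_altdef)
next
  case (Suc L)
  interpret finite_measure M by fact
  let ?H = "hit_event M T L U" and ?R = "U \<inter> {x \<in> space M. enat (Suc L) \<le> first_return T U x}"
  have H_sets: "hit_event M T k U \<in> sets M" for k
    using sets_hit_event[OF assms(2,4)] .
  have preimage_sets: "T -` ?H \<inter> space M \<in> sets M"
    using measurable_sets[OF assms(2) H_sets] .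
  have "T -` ?H \<inter> space M \<subseteq> hit_event M T (Suc L) U"
    using hit_event_Suc_eq[OF assms(2), of L U] by blast
  then have "measure M (hit_event M T (Suc L) U - (T -` ?H \<inter> space M)) =
               measure M (hit_event M T (Suc L) U) - measure M (T -` ?H \<inter> space M)"
    using finite_measure_Diff[OF H_sets preimage_sets] by blast
  moreover have "hit_event M T (Suc L) U - (T -` ?H \<inter> space M) = ?R"
    using hit_event_Suc_eq[OF assms(2), of L U]
    unfolding hit_event_altdef enat_Suc_le_first_return_iff by auto
  ultimately have "measure M (hit_event M T (Suc L) U) = measure M ?R + measure M (T -` ?H \<inter> space M)"
    by simp
  also have "measure M (T -` ?H \<inter> space M) = measure M ?H"
    using measure_distr[OF assms(2) H_sets] assms(3) by simp
  finally show ?case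
    using Suc.IH by simp
qed

lemma measure_hit_event_eq_alpha1_sum:
  assumes "finite_measure M" "T \<in> measurable M M" "distr M M T = M" "U \<in> sets M"
    and "measure M U > 0"
  shows "measure M (hit_event M T L U) = measure M U * (\<Sum>j=1..L. alpha1 M T j U)"
  using measure_hit_event[OF assms(1-4)] assms(5)
  by (simp add: sum_distrib_left alpha1_def cond_measure_def Int_commute)

lemma hit_event_ratio_tendsto:
  assumes "finite_measure M" "T \<in> measurable M M" "distr M M T = M"
    and "\<And>n. Us n \<in> sets M" "\<And>n. measure M (Us n) > 0"
    and "\<And>j. (\<lambda>n. alpha1 M T j (Us n)) \<longlonglongrightarrow> a j"
  shows "(\<lambda>n. measure M (hit_event M T L (Us n)) / (real L * measure M (Us n)))
           \<longlonglongrightarrow> (\<Sum>j=1..L. a j) / real L"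
proof -
  have "measure M (Us n) \<noteq> 0" for n
    using assms(5)[of n] by simp
  then have "(\<lambda>n. measure M (hit_event M T L (Us n)) / (real L * measure M (Us n))) =
               (\<lambda>n. (\<Sum>j=1..L. alpha1 M T j (Us n)) / real L)"
    using measure_hit_event_eq_alpha1_sum[OF assms(1-3) assms(4,5)] by simp
  moreover have "(\<lambda>n. (\<Sum>j=1..L. alpha1 M T j (Us n)) * inverse (real L))
                   \<longlonglongrightarrow> (\<Sum>j=1..L. a j) * inverse (real L)"
    by (intro tendsto_mult_right tendsto_sum assms(6))
  ultimately show ?thesis
    by (simp only: divide_inverse)
qed

theorem mainTheorem2:
  fixes M :: "'a measure" and T :: "'a \<Rightarrow> 'a"
  assumes "prob_space M"
    and "T \<in> measurable M M"
    and "distr M M T = M"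
  shows "(\<forall>U \<in> sets M. measure M U > 0 \<longrightarrow>
            (\<forall>L::nat. measure M (hit_event M T L U) = measure M U * (\<Sum>j=1..L. alpha1 M T j U)))
       \<and> (\<forall>(Us :: nat \<Rightarrow> 'a set) (a :: nat \<Rightarrow> real) (\<alpha> :: real).
            (\<forall>n. Us n \<in> sets M) \<longrightarrow> (\<forall>n. measure M (Us n) > 0) \<longrightarrow>
            (\<forall>n. Us (Suc n) \<subseteq> Us n) \<longrightarrow>
            (\<lambda>n. measure M (Us n)) \<longlonglongrightarrow> 0 \<longrightarrow>
            (\<forall>L. (\<lambda>n. alpha1 M T L (Us n)) \<longlonglongrightarrow> a L) \<longrightarrow>
            a \<longlonglongrightarrow> \<alpha> \<longrightarrow> \<alpha> > 0 \<longrightarrow>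
            (\<exists>b :: nat \<Rightarrow> real.
               (\<forall>L\<ge>1. (\<lambda>n. measure M (hit_event M T L (Us n)) / (real L * measure M (Us n)))
                          \<longlonglongrightarrow> b L)
               \<and> b \<longlonglongrightarrow> \<alpha>))"
proof -
  have finite: "finite_measure M"
    using assms(1) by (simp add: prob_space_def)
  show ?thesis
  proof (intro conjI ballI impI allI)
    fix U L
    assume "U \<in> sets M" "measure M U > 0"
    then show "measure M (hit_event M T L U) = measure M U * (\<Sum>j=1..L. alpha1 M T j U)"
      by (intro measure_hit_event_eq_alpha1_sum[OF finite assms(2,3)]) auto
  next
    fix Us :: "nat \<Rightarrow> 'a set" and a :: "nat \<Rightarrow> real" and \<alpha> :: real
    assume "\<forall>n. Us n \<in> sets M" "\<forall>n. measure M (Us n) > 0"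
      and "\<forall>L. (\<lambda>n. alpha1 M T L (Us n)) \<longlonglongrightarrow> a L" and "a \<longlonglongrightarrow> \<alpha>"
    then have "(\<lambda>n. measure M (hit_event M T L (Us n)) / (real L * measure M (Us n)))
                 \<longlonglongrightarrow> (\<Sum>j=1..L. a j) / real L" for L
      by (intro hit_event_ratio_tendsto[OF finite assms(2,3)]) auto
    then show "\<exists>b. (\<forall>L\<ge>1. (\<lambda>n. measure M (hit_event M T L (Us n)) / (real L * measure M (Us n)))
                          \<longlonglongrightarrow> b L) \<and> b \<longlonglongrightarrow> \<alpha>"
      using cesaro_mean_tendsto[OF \<open>a \<longlonglongrightarrow> \<alpha>\<close>] by (intro exI conjI allI impI)
  qed
qed

end
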